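(* Let $\beta_U,\beta_H,\beta_R>0$ with $\beta_U+\beta_H+\beta_R=1$ and $\beta_U<\tfrac12$, and let $\gamma\ge 0$. For $x\in[0,1]$ define $p_m(x)=\beta_U(1-\beta_U-x\beta_R)^2$, $p_f(x)=\beta_U(\beta_U+x\beta_R)(\beta_U+x\beta_R+\beta_H)$ and $$E[R_r](x)=\frac{\beta_R}{\beta_R+\beta_H}p_m(x)+\frac{(1-x)\beta_R}{\beta_H+(1-x)\beta_R}\,2\gamma\,p_m(x)+\frac{x\beta_R}{x\beta_R+\beta_U}\,\gamma\,p_f(x)+\frac{x\beta_R}{x\beta_R+\beta_U+\beta_H}\,p_f(x).$$ Then $E[R_r](0)<E[R_r](1)$ if and only if $$\gamma<\frac{\frac{\beta_H^2}{1-\beta_U}+\beta_U-\beta_H}{1-2\beta_U}.$$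
   Context: Model of an undercutting attack with safe depth $D=2$ (the undercutter abandons its fork once it is two blocks behind). The undercutter has mining-power fraction $\beta_U$, honest miners have total $\beta_H$, and rational non-undercutting miners have total $\beta_R$. A fraction $x$ of the rational mining power moves to the fork when the fork ties the main chain. $p_m$ and $p_f$ approximate the probabilities that the main chain, respectively the fork, first leads by two blocks. Fees are normalized so the undercut block holds $1$, the subsequent main-chain blocks and the first two fork blocks hold $\gamma$, and the third fork block holds $1$. $E[R_r](x)$ is the rational miners' expected revenue. *)

theory Defs
  imports Complex_Main
begin

definition p_m :: "real \<Rightarrow> real \<Rightarrow> real \<Rightarrow> real \<Rightarrow> real" where
  "p_m bU bH bR x = bU * (1 - bU - x * bR)^2"

definition p_f :: "real \<Rightarrow> real \<Rightarrow> real \<Rightarrow> real \<Rightarrow> real" where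
  "p_f bU bH bR x = bU * (bU + x * bR) * (bU + x * bR + bH)"

definition E_Rr :: "real \<Rightarrow> real \<Rightarrow> real \<Rightarrow> real \<Rightarrow> real \<Rightarrow> real" where
  "E_Rr bU bH bR \<gamma> x =
     bR / (bR + bH) * p_m bU bH bR x
   + ((1 - x) * bR) / (bH + (1 - x) * bR) * (2 * \<gamma>) * p_m bU bH bR x
   + (x * bR) / (x * bR + bU) * \<gamma> * p_f bU bH bR x
   + (x * bR) / (x * bR + bU + bH) * p_f bU bH bR x"

end

theory Submission
  imports Defs
begin

text \<open>Both endpoint revenues factor as \<open>\<beta>\<^sub>U \<beta>\<^sub>R\<close> times a quantity affine in \<open>\<gamma>\<close>:
  at \<open>x = 0\<close> only the main-chain terms survive and give \<open>(1 - \<beta>\<^sub>U)(1 + 2\<gamma>)\<close>, at \<open>x = 1\<close>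
  the fork terms give \<open>\<beta>\<^sub>H\<^sup>2/(1 - \<beta>\<^sub>U) + \<gamma> + 1 - \<beta>\<^sub>H\<close>. Comparing them leaves the linear
  inequality \<open>\<gamma> (1 - 2\<beta>\<^sub>U) < \<beta>\<^sub>H\<^sup>2/(1 - \<beta>\<^sub>U) + \<beta>\<^sub>U - \<beta>\<^sub>H\<close>, and \<open>1 - 2\<beta>\<^sub>U > 0\<close>.\<close>

lemma E_Rr_at_0:
  assumes "bU + bH + bR = 1"
  shows "E_Rr bU bH bR \<gamma> 0 = bU * bR * ((1 - bU) * (1 + 2 * \<gamma>))"
proof -
  have sum: "bR + bH = 1 - bU" "bH + bR = 1 - bU"
    using assms by auto
  have pm: "p_m bU bH bR 0 = bU * (1 - bU)^2"
    by (simp add: p_m_def)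
  have "E_Rr bU bH bR \<gamma> 0 = bR / (1 - bU) * (bU * (1 - bU)^2) * (1 + 2 * \<gamma>)"
    by (simp add: E_Rr_def pm sum algebra_simps add_divide_distrib)
  also have "\<dots> = bU * bR * ((1 - bU) * (1 + 2 * \<gamma>))"
    by (cases "bU = 1") (simp_all add: power2_eq_square)
  finally show ?thesis .
qed

lemma E_Rr_at_1:
  assumes "bU + bH + bR = 1" "bH \<noteq> 1"
  shows "E_Rr bU bH bR \<gamma> 1 = bU * bR * (bH^2 / (1 - bU) + \<gamma> + 1 - bH)"
proof -
  have sum: "bR + bH = 1 - bU" "bR + bU = 1 - bH" "bU + bR = 1 - bH"
      "bR + bU + bH = 1" "bU + bR + bH = 1" "1 - bU - bR = bH"
    using assms(1) by auto
  have pm: "p_m bU bH bR 1 = bU * bH^2"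
    by (simp add: p_m_def sum)
  have pf: "p_f bU bH bR 1 = bU * (1 - bH)"
    by (simp add: p_f_def sum)
  have "E_Rr bU bH bR \<gamma> 1 = bR / (1 - bU) * (bU * bH^2) + bR / (1 - bH) * \<gamma> * (bU * (1 - bH))
      + bR * (bU * (1 - bH))"
    by (simp add: E_Rr_def pm pf sum)
  also have "\<dots> = bU * bR * (bH^2 / (1 - bU) + \<gamma> + 1 - bH)"
  proof -
    have "bR / (1 - bH) * \<gamma> * (bU * (1 - bH)) = bU * bR * \<gamma>"
      using assms(2) by simp
    then show ?thesis
      by (simp add: algebra_simps)
  qed
  finally show ?thesis .
qed

theorem mainTheorem5:
  fixes bU bH bR \<gamma> :: real
  assumes "bU > 0" "bH > 0" "bR > 0" "bU + bH + bR = 1" "bU < 1/2" "\<gamma> \<ge> 0"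
  shows "E_Rr bU bH bR \<gamma> 0 < E_Rr bU bH bR \<gamma> 1 \<longleftrightarrow>
         \<gamma> < (bH^2 / (1 - bU) + bU - bH) / (1 - 2 * bU)"
proof -
  have "bU * bR > 0"
    using assms(1,3) by simp
  then have "E_Rr bU bH bR \<gamma> 0 < E_Rr bU bH bR \<gamma> 1 \<longleftrightarrow>
        (1 - bU) * (1 + 2 * \<gamma>) < bH^2 / (1 - bU) + \<gamma> + 1 - bH"
    using assms by (simp add: E_Rr_at_0 E_Rr_at_1)
  also have "\<dots> \<longleftrightarrow> \<gamma> * (1 - 2 * bU) < bH^2 / (1 - bU) + bU - bH"
    by (simp add: algebra_simps)
  also have "\<dots> \<longleftrightarrow> \<gamma> < (bH^2 / (1 - bU) + bU - bH) / (1 - 2 * bU)"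
    using assms(5) by (simp add: pos_less_divide_eq)
  finally show ?thesis .
qed

end
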